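(* For $1\le\ell\le n$ let $s_{n,\ell}$ be the number of permutations $\sigma$ of $\{1,\dots,n\}$ avoiding both $1324$ and $2134$ with $\sigma(n)=\ell$. Then $h(x,u)=\sum_{n=1}^\infty\sum_{\ell=1}^n s_{n,\ell}u^\ell x^n$ is given by \[ h(x,u)=\frac{2ux(1-u)(1-ux)+ux\big(1-u(1-u)x\big)\big(1-x-\sqrt{1-6x+x^2}\big)}{2\big(1-u(1+x)+2u^2x\big)}. \] In particular, \[ h(x,1)=\frac{1-x-\sqrt{1-6x+x^2}}{2}, \] so the number of permutations of $\{1,\dots,n\}$ avoiding $1324$ and $2134$ is the $n$-th large Schröder number.
   Context: A permutation avoids a pattern $p$ if no subsequence of its one-line notation is order-isomorphic to $p$. The large Schröder numbers $1,2,6,22,90,\dots$ (for $n=1,2,\dots$) have generating function $\frac{1-x-\sqrt{1-6x+x^2}}{2}$ without constant term. *)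

theory Defs
  imports "HOL-Computational_Algebra.Computational_Algebra"
          "HOL-Combinatorics.Permutations"
begin

definition contains_pattern :: "(nat \<Rightarrow> nat) \<Rightarrow> nat \<Rightarrow> nat list \<Rightarrow> bool" where
  "contains_pattern \<sigma> n p \<longleftrightarrow>
     (\<exists>is. length is = length p \<and> sorted_wrt (<) is \<and> set is \<subseteq> {1..n} \<and>
        (\<forall>a<length p. \<forall>b<length p. \<sigma> (is ! a) < \<sigma> (is ! b) \<longleftrightarrow> p ! a < p ! b))"

definition avoids :: "(nat \<Rightarrow> nat) \<Rightarrow> nat \<Rightarrow> nat list \<Rightarrow> bool" where
  "avoids \<sigma> n p \<longleftrightarrow> \<not> contains_pattern \<sigma> n p"

definition av_perms :: "nat \<Rightarrow> (nat \<Rightarrow> nat) set" where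
  "av_perms n = {\<sigma>. \<sigma> permutes {1..n} \<and> avoids \<sigma> n [1,3,2,4] \<and> avoids \<sigma> n [2,1,3,4]}"

definition s :: "nat \<Rightarrow> nat \<Rightarrow> nat" where
  "s n l = card {\<sigma> \<in> av_perms n. \<sigma> n = l}"

definition u_var :: "real poly fract" where
  "u_var = to_fract [:0, 1:]"

text \<open>h(x,u) as a formal power series in x whose coefficients are (polynomials in) u.\<close>
definition h_fps :: "real poly fract fps" where
  "h_fps = Abs_fps (\<lambda>n. \<Sum>l=1..n. of_nat (s n l) * u_var ^ l)"

definition sqrt_fps :: "real fps" where
  "sqrt_fps = fps_radical (\<lambda>k c. root k c) 2 (1 - 6 * fps_X + fps_X ^ 2)"

definition sqrt_fps_u :: "real poly fract fps" where
  "sqrt_fps_u = Abs_fps (\<lambda>n. to_fract [:sqrt_fps $ n:])"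

end

theory Submission
  imports Defs
begin

text \<open>Deleting the last entry \<open>l\<close> of a permutation \<open>\<sigma>\<close> of \<open>{1..n+1}\<close> and standardising
  leaves a permutation \<open>\<tau>\<close> of \<open>{1..n}\<close>. An occurrence of 1324 or 2134 that uses the last
  entry has its maximum there, so \<open>\<sigma>\<close> avoids both patterns iff \<open>\<tau>\<close> does and the entries
  of \<open>\<tau>\<close> below \<open>l\<close> contain no 132 and no 213. Following this side condition through
  one more deletion gives the recurrences
  \<open>s (n+2) k = s (n+1) 1 + \<dots> + s (n+1) (n+1)\<close> for \<open>k \<le> 3\<close> and
  \<open>s (n+2) k = s (n+1) k + \<dots> + s (n+1) (n+1) + 2 s (n+1) (k-1)\<close> for \<open>k \<ge> 4\<close>;
  the factor 2 appears because, when the entries below \<open>k-1\<close> contain no 132 or 213, exactly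
  two values \<open>l < k\<close> can be appended without creating a 132 or 213 below \<open>k\<close>.
  With \<open>S = (1 - x - sqrt(1 - 6x + x^2))/2\<close>, i.e. \<open>S = x + x S + S^2\<close>, and \<open>V = x + S\<close>, the
  recurrences are solved by \<open>s N l = [x^(N-1)] S V^(l-2)\<close>; weighting by \<open>u^l\<close> and summing
  a geometric series in \<open>u V\<close> gives the closed form of \<open>h\<close>.\<close>

section \<open>Occurrences of 1324 and 2134\<close>

lemma all_less_4_iff: "(\<forall>a<(4::nat). P a) \<longleftrightarrow> P 0 \<and> P 1 \<and> P 2 \<and> P 3"
  by (auto simp: less_Suc_eq numeral_eq_Suc)

lemma contains_pattern_length4:
  assumes "length p = 4"
  shows "contains_pattern \<sigma> n p \<longleftrightarrow>
    (\<exists>i1 i2 i3 i4. 1 \<le> i1 \<and> i1 < i2 \<and> i2 < i3 \<and> i3 < i4 \<and> i4 \<le> n \<and>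
       (\<forall>a<4. \<forall>b<4. \<sigma> ([i1,i2,i3,i4] ! a) < \<sigma> ([i1,i2,i3,i4] ! b) \<longleftrightarrow> p ! a < p ! b))"
proof
  assume "contains_pattern \<sigma> n p"
  then obtain js where js: "length js = 4" "sorted_wrt (<) js" "set js \<subseteq> {1..n}"
    "\<forall>a<4. \<forall>b<4. \<sigma> (js ! a) < \<sigma> (js ! b) \<longleftrightarrow> p ! a < p ! b"
    using assms unfolding contains_pattern_def by auto
  then obtain i1 i2 i3 i4 where "js = [i1, i2, i3, i4]"
    by (auto simp: numeral_eq_Suc length_Suc_conv)
  with js show "\<exists>i1 i2 i3 i4. 1 \<le> i1 \<and> i1 < i2 \<and> i2 < i3 \<and> i3 < i4 \<and> i4 \<le> n \<and>
       (\<forall>a<4. \<forall>b<4. \<sigma> ([i1,i2,i3,i4] ! a) < \<sigma> ([i1,i2,i3,i4] ! b) \<longleftrightarrow> p ! a < p ! b)"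
    by auto
next
  assume "\<exists>i1 i2 i3 i4. 1 \<le> i1 \<and> i1 < i2 \<and> i2 < i3 \<and> i3 < i4 \<and> i4 \<le> n \<and>
       (\<forall>a<4. \<forall>b<4. \<sigma> ([i1,i2,i3,i4] ! a) < \<sigma> ([i1,i2,i3,i4] ! b) \<longleftrightarrow> p ! a < p ! b)"
  then obtain i1 i2 i3 i4 where "1 \<le> i1" "i1 < i2" "i2 < i3" "i3 < i4" "i4 \<le> n"
    "\<forall>a<4. \<forall>b<4. \<sigma> ([i1,i2,i3,i4] ! a) < \<sigma> ([i1,i2,i3,i4] ! b) \<longleftrightarrow> p ! a < p ! b"
    by blast
  with assms show "contains_pattern \<sigma> n p"
    unfolding contains_pattern_def by (intro exI[of _ "[i1, i2, i3, i4]"]) auto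
qed

lemma contains_1324_iff:
  fixes \<sigma> :: "nat \<Rightarrow> nat"
  shows "contains_pattern \<sigma> n [1,3,2,4] \<longleftrightarrow>
    (\<exists>i1 i2 i3 i4. 1 \<le> i1 \<and> i1 < i2 \<and> i2 < i3 \<and> i3 < i4 \<and> i4 \<le> n \<and>
       \<sigma> i1 < \<sigma> i3 \<and> \<sigma> i3 < \<sigma> i2 \<and> \<sigma> i2 < \<sigma> i4)"
proof -
  have "(\<forall>a<4. \<forall>b<4. \<sigma> ([i1,i2,i3,i4] ! a) < \<sigma> ([i1,i2,i3,i4] ! b) \<longleftrightarrow>
      [1,3,2,4::nat] ! a < [1,3,2,4] ! b) \<longleftrightarrow> \<sigma> i1 < \<sigma> i3 \<and> \<sigma> i3 < \<sigma> i2 \<and> \<sigma> i2 < \<sigma> i4"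
    for i1 i2 i3 i4
    unfolding all_less_4_iff
    by (simp add: numeral_2_eq_2 numeral_3_eq_3) (intro iffI; (elim conjE)?; (intro conjI)?; linarith)
  then show ?thesis by (simp add: contains_pattern_length4)
qed

lemma contains_2134_iff:
  fixes \<sigma> :: "nat \<Rightarrow> nat"
  shows "contains_pattern \<sigma> n [2,1,3,4] \<longleftrightarrow>
    (\<exists>i1 i2 i3 i4. 1 \<le> i1 \<and> i1 < i2 \<and> i2 < i3 \<and> i3 < i4 \<and> i4 \<le> n \<and>
       \<sigma> i2 < \<sigma> i1 \<and> \<sigma> i1 < \<sigma> i3 \<and> \<sigma> i3 < \<sigma> i4)"
proof -
  have "(\<forall>a<4. \<forall>b<4. \<sigma> ([i1,i2,i3,i4] ! a) < \<sigma> ([i1,i2,i3,i4] ! b) \<longleftrightarrow>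
      [2,1,3,4::nat] ! a < [2,1,3,4] ! b) \<longleftrightarrow> \<sigma> i2 < \<sigma> i1 \<and> \<sigma> i1 < \<sigma> i3 \<and> \<sigma> i3 < \<sigma> i4"
    for i1 i2 i3 i4
    unfolding all_less_4_iff
    by (simp add: numeral_2_eq_2 numeral_3_eq_3) (intro iffI; (elim conjE)?; (intro conjI)?; linarith)
  then show ?thesis by (simp add: contains_pattern_length4)
qed

definition pattern_132_or_213 :: "nat \<Rightarrow> nat \<Rightarrow> nat \<Rightarrow> bool" where
  "pattern_132_or_213 a b c \<longleftrightarrow> a < c \<and> c < b \<or> b < a \<and> a < c"

definition contains_1324_or_2134 :: "(nat \<Rightarrow> nat) \<Rightarrow> nat \<Rightarrow> bool" where
  "contains_1324_or_2134 \<sigma> n \<longleftrightarrow>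
     (\<exists>i1 i2 i3 i4. 1 \<le> i1 \<and> i1 < i2 \<and> i2 < i3 \<and> i3 < i4 \<and> i4 \<le> n \<and>
        pattern_132_or_213 (\<sigma> i1) (\<sigma> i2) (\<sigma> i3) \<and> \<sigma> i2 < \<sigma> i4 \<and> \<sigma> i3 < \<sigma> i4)"

lemma contains_1324_or_2134_iff:
  "contains_1324_or_2134 \<sigma> n \<longleftrightarrow> contains_pattern \<sigma> n [1,3,2,4] \<or> contains_pattern \<sigma> n [2,1,3,4]"
proof -
  have "pattern_132_or_213 a b c \<and> b < d \<and> c < d \<longleftrightarrow> a < c \<and> c < b \<and> b < d \<or> b < a \<and> a < c \<and> c < d"
    for a b c d :: nat
    unfolding pattern_132_or_213_def by linarith
  then show ?thesis
    unfolding contains_1324_or_2134_def contains_1324_iff contains_2134_iff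
    by (simp only: conj_disj_distribL ex_disj_distrib)
qed

lemma av_perms_iff: "\<sigma> \<in> av_perms n \<longleftrightarrow> \<sigma> permutes {1..n} \<and> \<not> contains_1324_or_2134 \<sigma> n"
  by (simp add: av_perms_def avoids_def contains_1324_or_2134_iff)

lemma finite_av_perms: "finite (av_perms n)"
  by (rule finite_subset[OF _ finite_permutations[of "{1..n}"]]) (auto simp: av_perms_def)

section \<open>Appending a last entry\<close>

definition shift_from :: "nat \<Rightarrow> nat \<Rightarrow> nat" where
  "shift_from l v = (if v < l then v else Suc v)"

lemma shift_from_less_iff [simp]: "shift_from l a < shift_from l b \<longleftrightarrow> a < b"
  by (auto simp: shift_from_def)

lemma shift_from_eq_iff [simp]: "shift_from l a = shift_from l b \<longleftrightarrow> a = b"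
  by (auto simp: shift_from_def)

lemma shift_from_neq [simp]: "shift_from l v \<noteq> l" "l \<noteq> shift_from l v"
  by (auto simp: shift_from_def)

lemma shift_from_less_bound_iff: "shift_from l v < k \<longleftrightarrow> v < (if k \<le> l then k else k - 1)"
  by (auto simp: shift_from_def)

lemma shift_from_eq_self: "v < l \<Longrightarrow> shift_from l v = v"
  by (simp add: shift_from_def)

lemma pattern_132_or_213_shift_from [simp]:
  "pattern_132_or_213 (shift_from l a) (shift_from l b) (shift_from l c) \<longleftrightarrow> pattern_132_or_213 a b c"
  by (simp add: pattern_132_or_213_def)

definition append_last :: "(nat \<Rightarrow> nat) \<Rightarrow> nat \<Rightarrow> nat \<Rightarrow> nat \<Rightarrow> nat" where
  "append_last \<tau> n l = (\<lambda>i. if i = Suc n then l else if 1 \<le> i \<and> i \<le> n then shift_from l (\<tau> i) else i)"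

definition remove_last :: "(nat \<Rightarrow> nat) \<Rightarrow> nat \<Rightarrow> nat \<Rightarrow> nat" where
  "remove_last \<sigma> n = (\<lambda>i. if 1 \<le> i \<and> i \<le> n then (if \<sigma> i < \<sigma> (Suc n) then \<sigma> i else \<sigma> i - 1) else i)"

lemma append_last_apply: "1 \<le> i \<Longrightarrow> i \<le> n \<Longrightarrow> append_last \<tau> n l i = shift_from l (\<tau> i)"
  by (simp add: append_last_def)

lemma append_last_last [simp]: "append_last \<tau> n l (Suc n) = l"
  by (simp add: append_last_def)

lemma permutes_interval_range: "\<tau> permutes {1..n} \<Longrightarrow> 1 \<le> i \<Longrightarrow> i \<le> n \<Longrightarrow> 1 \<le> \<tau> i \<and> \<tau> i \<le> n"
  using permutes_in_image[of \<tau> "{1..n}" i] by simp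

lemma append_last_permutes:
  assumes \<tau>: "\<tau> permutes {1..n}" and l: "1 \<le> l" "l \<le> Suc n"
  shows "append_last \<tau> n l permutes {1..Suc n}"
proof (rule inj_imp_permutes)
  show "inj_on (append_last \<tau> n l) {1..Suc n}"
  proof (rule inj_onI)
    fix i j assume "i \<in> {1..Suc n}" "j \<in> {1..Suc n}" "append_last \<tau> n l i = append_last \<tau> n l j"
    then show "i = j"
      using permutes_inj[OF \<tau>]
      by (cases "i = Suc n"; cases "j = Suc n") (auto simp: append_last_apply dest: injD)
  qed
  show "append_last \<tau> n l i \<in> {1..Suc n}" if "i \<in> {1..Suc n}" for i
    using that l permutes_interval_range[OF \<tau>, of i] by (auto simp: append_last_def shift_from_def)
qed (auto simp: append_last_def)

lemma remove_last_append_last: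
  assumes "\<tau> permutes {1..n}"
  shows "remove_last (append_last \<tau> n l) n = \<tau>"
proof
  fix i
  show "remove_last (append_last \<tau> n l) n i = \<tau> i"
    using permutes_not_in[OF assms, of i]
    by (cases "1 \<le> i \<and> i \<le> n") (auto simp: remove_last_def append_last_apply shift_from_def)
qed

lemma permutes_neq_last:
  "\<sigma> permutes {1..Suc n} \<Longrightarrow> i \<le> n \<Longrightarrow> \<sigma> i \<noteq> \<sigma> (Suc n)"
  using permutes_inj[of \<sigma>] by (metis injD n_not_Suc_n le_imp_less_Suc less_not_refl)

lemma remove_last_permutes:
  assumes \<sigma>: "\<sigma> permutes {1..Suc n}"
  shows "remove_last \<sigma> n permutes {1..n}"
proof (rule inj_imp_permutes)
  have range: "1 \<le> \<sigma> i" "\<sigma> i \<le> Suc n" "\<sigma> i \<noteq> \<sigma> (Suc n)" if "i \<in> {1..n}" for i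
    using permutes_interval_range[OF \<sigma>, of i] permutes_neq_last[OF \<sigma>, of i] that by auto
  have last: "1 \<le> \<sigma> (Suc n)" "\<sigma> (Suc n) \<le> Suc n"
    using permutes_interval_range[OF \<sigma>, of "Suc n"] by auto
  show "inj_on (remove_last \<sigma> n) {1..n}"
  proof (rule inj_onI)
    fix i j assume i: "i \<in> {1..n}" and j: "j \<in> {1..n}"
      and eq: "remove_last \<sigma> n i = remove_last \<sigma> n j"
    have "\<sigma> i = \<sigma> j"
      using eq range[OF i] range[OF j] i j unfolding remove_last_def by (simp split: if_splits)
    then show "i = j"
      using permutes_inj[OF \<sigma>] by (simp add: inj_eq)
  qed
  show "remove_last \<sigma> n i \<in> {1..n}" if i: "i \<in> {1..n}" for i
    using range[OF i] last i unfolding remove_last_def by auto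
qed (auto simp: remove_last_def)

lemma append_last_remove_last:
  assumes \<sigma>: "\<sigma> permutes {1..Suc n}"
  shows "append_last (remove_last \<sigma> n) n (\<sigma> (Suc n)) = \<sigma>"
proof
  fix i
  consider "i = Suc n" | "1 \<le> i \<and> i \<le> n" | "i \<notin> {1..Suc n}" by fastforce
  then show "append_last (remove_last \<sigma> n) n (\<sigma> (Suc n)) i = \<sigma> i"
  proof cases
    case 2
    then show ?thesis
      using permutes_neq_last[OF \<sigma>, of i]
      by (auto simp: append_last_apply remove_last_def shift_from_def)
  next
    case 3
    then show ?thesis
      using permutes_not_in[OF \<sigma> 3] by (auto simp: append_last_def)
  qed simp
qed

section \<open>Occurrences of 132 and 213 below a bound\<close>

definition has_132_or_213_below :: "(nat \<Rightarrow> nat) \<Rightarrow> nat \<Rightarrow> nat \<Rightarrow> bool" where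
  "has_132_or_213_below \<tau> n l \<longleftrightarrow>
     (\<exists>i1 i2 i3. 1 \<le> i1 \<and> i1 < i2 \<and> i2 < i3 \<and> i3 \<le> n \<and> \<tau> i1 < l \<and> \<tau> i2 < l \<and> \<tau> i3 < l \<and>
        pattern_132_or_213 (\<tau> i1) (\<tau> i2) (\<tau> i3))"

lemma has_132_or_213_below_mono: "has_132_or_213_below \<tau> n k \<Longrightarrow> k \<le> l \<Longrightarrow> has_132_or_213_below \<tau> n l"
  unfolding has_132_or_213_below_def by (meson order_less_le_trans)

lemma not_has_132_or_213_below_3:
  assumes \<tau>: "\<tau> permutes {1..n}" and k: "k \<le> 3"
  shows "\<not> has_132_or_213_below \<tau> n k"
proof
  assume "has_132_or_213_below \<tau> n k"
  then obtain i1 i2 i3 where i: "1 \<le> i1" "i1 < i2" "i2 < i3" "i3 \<le> n" "\<tau> i1 < k" "\<tau> i2 < k" "\<tau> i3 < k"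
    and pat: "pattern_132_or_213 (\<tau> i1) (\<tau> i2) (\<tau> i3)"
    unfolding has_132_or_213_below_def by blast
  have "1 \<le> \<tau> i1" "1 \<le> \<tau> i2"
    using permutes_interval_range[OF \<tau>, of i1] permutes_interval_range[OF \<tau>, of i2] i by auto
  with i k pat show False
    unfolding pattern_132_or_213_def by linarith
qed

lemma contains_1324_or_2134_append_lastD:
  assumes "contains_1324_or_2134 (append_last \<tau> n l) (Suc n)"
  shows "contains_1324_or_2134 \<tau> n \<or> has_132_or_213_below \<tau> n l"
proof -
  let ?\<sigma> = "append_last \<tau> n l"
  obtain i1 i2 i3 i4 where i: "1 \<le> i1" "i1 < i2" "i2 < i3" "i3 < i4" "i4 \<le> Suc n"
    and pat: "pattern_132_or_213 (?\<sigma> i1) (?\<sigma> i2) (?\<sigma> i3)" "?\<sigma> i2 < ?\<sigma> i4" "?\<sigma> i3 < ?\<sigma> i4"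
    using assms unfolding contains_1324_or_2134_def by blast
  have \<sigma>_i: "?\<sigma> i1 = shift_from l (\<tau> i1)" "?\<sigma> i2 = shift_from l (\<tau> i2)" "?\<sigma> i3 = shift_from l (\<tau> i3)"
    using i by (simp_all add: append_last_apply)
  show ?thesis
  proof (cases "i4 = Suc n")
    case True
    \<comment> \<open>in both patterns the first entry lies below the third\<close>
    then have "\<tau> i1 < l \<and> \<tau> i2 < l \<and> \<tau> i3 < l"
      using pat \<sigma>_i unfolding pattern_132_or_213_def
      by (metis append_last_last order.strict_trans shift_from_less_iff shift_from_eq_self)
    then show ?thesis
      using i pat \<sigma>_i unfolding has_132_or_213_below_def
      by (intro disjI2 exI[of _ i1] exI[of _ i2] exI[of _ i3]) (simp add: shift_from_eq_self)
  next
    case False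
    then show ?thesis
      using i pat \<sigma>_i unfolding contains_1324_or_2134_def
      by (intro disjI1 exI[of _ i1] exI[of _ i2] exI[of _ i3] exI[of _ i4]) (simp add: append_last_apply)
  qed
qed

lemma contains_1324_or_2134_append_lastI:
  assumes "contains_1324_or_2134 \<tau> n \<or> has_132_or_213_below \<tau> n l"
  shows "contains_1324_or_2134 (append_last \<tau> n l) (Suc n)"
  using assms
proof
  assume "contains_1324_or_2134 \<tau> n"
  then obtain i1 i2 i3 i4 where "1 \<le> i1" "i1 < i2" "i2 < i3" "i3 < i4" "i4 \<le> n"
    "pattern_132_or_213 (\<tau> i1) (\<tau> i2) (\<tau> i3)" "\<tau> i2 < \<tau> i4" "\<tau> i3 < \<tau> i4"
    unfolding contains_1324_or_2134_def by blast
  then show ?thesis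
    unfolding contains_1324_or_2134_def
    by (intro exI[of _ i1] exI[of _ i2] exI[of _ i3] exI[of _ i4]) (simp add: append_last_apply)
next
  assume "has_132_or_213_below \<tau> n l"
  then obtain i1 i2 i3 where "1 \<le> i1" "i1 < i2" "i2 < i3" "i3 \<le> n" "\<tau> i1 < l" "\<tau> i2 < l" "\<tau> i3 < l"
    "pattern_132_or_213 (\<tau> i1) (\<tau> i2) (\<tau> i3)"
    unfolding has_132_or_213_below_def by blast
  then show ?thesis
    unfolding contains_1324_or_2134_def
    by (intro exI[of _ i1] exI[of _ i2] exI[of _ i3] exI[of _ "Suc n"])
      (simp add: append_last_apply shift_from_eq_self)
qed

lemma contains_1324_or_2134_append_last:
  "contains_1324_or_2134 (append_last \<tau> n l) (Suc n) \<longleftrightarrow>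
    contains_1324_or_2134 \<tau> n \<or> has_132_or_213_below \<tau> n l"
  using contains_1324_or_2134_append_lastD contains_1324_or_2134_append_lastI by blast

text \<open>For \<open>l < k\<close>, these are the occurrences of 132 and of 213 below \<open>k\<close> in \<open>append_last \<tau> n l\<close>
  that end at its last entry.\<close>
definition ascent_across :: "(nat \<Rightarrow> nat) \<Rightarrow> nat \<Rightarrow> nat \<Rightarrow> nat \<Rightarrow> bool" where
  "ascent_across \<tau> n l k \<longleftrightarrow> (\<exists>i1 i2. 1 \<le> i1 \<and> i1 < i2 \<and> i2 \<le> n \<and> \<tau> i1 < l \<and> l \<le> \<tau> i2 \<and> Suc (\<tau> i2) < k)"

definition inversion_below :: "(nat \<Rightarrow> nat) \<Rightarrow> nat \<Rightarrow> nat \<Rightarrow> bool" where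
  "inversion_below \<tau> n l \<longleftrightarrow> (\<exists>i1 i2. 1 \<le> i1 \<and> i1 < i2 \<and> i2 \<le> n \<and> \<tau> i2 < \<tau> i1 \<and> \<tau> i1 < l)"

lemma inversion_below_mono: "inversion_below \<tau> n k \<Longrightarrow> k \<le> l \<Longrightarrow> inversion_below \<tau> n l"
  unfolding inversion_below_def by (meson order_less_le_trans)

lemma has_132_or_213_below_append_lastD:
  assumes "has_132_or_213_below (append_last \<tau> n l) (Suc n) k"
  shows "has_132_or_213_below \<tau> n (if k \<le> l then k else k - 1) \<or>
    l < k \<and> (ascent_across \<tau> n l k \<or> inversion_below \<tau> n l)"
proof -
  let ?\<sigma> = "append_last \<tau> n l"
  obtain i1 i2 i3 where i: "1 \<le> i1" "i1 < i2" "i2 < i3" "i3 \<le> Suc n" "?\<sigma> i1 < k" "?\<sigma> i2 < k" "?\<sigma> i3 < k"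
    and pat: "pattern_132_or_213 (?\<sigma> i1) (?\<sigma> i2) (?\<sigma> i3)"
    using assms unfolding has_132_or_213_below_def by blast
  have \<sigma>_i: "?\<sigma> i1 = shift_from l (\<tau> i1)" "?\<sigma> i2 = shift_from l (\<tau> i2)"
    using i by (simp_all add: append_last_apply)
  show ?thesis
  proof (cases "i3 = Suc n")
    case True
    then have "l < k" "i2 \<le> n" using i by simp_all
    moreover have "ascent_across \<tau> n l k \<or> inversion_below \<tau> n l"
      using pat i \<sigma>_i True unfolding pattern_132_or_213_def ascent_across_def inversion_below_def
      by (auto simp: shift_from_def split: if_splits)
    ultimately show ?thesis by simp
  next
    case False
    then have "?\<sigma> i3 = shift_from l (\<tau> i3)" using i by (simp add: append_last_apply)
    then show ?thesis
      using i pat \<sigma>_i False unfolding has_132_or_213_below_def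
      by (intro disjI1 exI[of _ i1] exI[of _ i2] exI[of _ i3]) (simp add: shift_from_less_bound_iff)
  qed
qed

lemma has_132_or_213_below_append_lastI:
  assumes "has_132_or_213_below \<tau> n (if k \<le> l then k else k - 1) \<or>
    l < k \<and> (ascent_across \<tau> n l k \<or> inversion_below \<tau> n l)"
  shows "has_132_or_213_below (append_last \<tau> n l) (Suc n) k"
proof -
  consider (old) "has_132_or_213_below \<tau> n (if k \<le> l then k else k - 1)"
    | (ascent) "l < k" "ascent_across \<tau> n l k" | (inversion) "l < k" "inversion_below \<tau> n l"
    using assms by blast
  then show ?thesis
  proof cases
    case old
    then obtain i1 i2 i3 where "1 \<le> i1" "i1 < i2" "i2 < i3" "i3 \<le> n"
      "\<tau> i1 < (if k \<le> l then k else k - 1)" "\<tau> i2 < (if k \<le> l then k else k - 1)"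
      "\<tau> i3 < (if k \<le> l then k else k - 1)" "pattern_132_or_213 (\<tau> i1) (\<tau> i2) (\<tau> i3)"
      unfolding has_132_or_213_below_def by blast
    then show ?thesis
      unfolding has_132_or_213_below_def
      by (intro exI[of _ i1] exI[of _ i2] exI[of _ i3]) (simp add: append_last_apply shift_from_less_bound_iff)
  next
    case ascent
    then obtain i1 i2 where "1 \<le> i1" "i1 < i2" "i2 \<le> n" "\<tau> i1 < l" "l \<le> \<tau> i2" "Suc (\<tau> i2) < k"
      unfolding ascent_across_def by blast
    with ascent show ?thesis
      unfolding has_132_or_213_below_def pattern_132_or_213_def
      by (intro exI[of _ i1] exI[of _ i2] exI[of _ "Suc n"]) (simp add: append_last_apply shift_from_def)
  next
    case inversion
    then obtain i1 i2 where "1 \<le> i1" "i1 < i2" "i2 \<le> n" "\<tau> i2 < \<tau> i1" "\<tau> i1 < l"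
      unfolding inversion_below_def by blast
    with inversion show ?thesis
      unfolding has_132_or_213_below_def pattern_132_or_213_def
      by (intro exI[of _ i1] exI[of _ i2] exI[of _ "Suc n"]) (simp add: append_last_apply shift_from_def)
  qed
qed

lemma has_132_or_213_below_append_last:
  "has_132_or_213_below (append_last \<tau> n l) (Suc n) k \<longleftrightarrow>
    has_132_or_213_below \<tau> n (if k \<le> l then k else k - 1) \<or>
    l < k \<and> (ascent_across \<tau> n l k \<or> inversion_below \<tau> n l)"
  using has_132_or_213_below_append_lastD has_132_or_213_below_append_lastI by blast

lemma permutes_interval_preimage:
  assumes "\<tau> permutes {1..n}" "1 \<le> v" "v \<le> n"
  obtains i where "1 \<le> i" "i \<le> n" "\<tau> i = v"
  using permutes_image[OF assms(1)] assms(2,3) by (metis atLeastAtMost_iff imageE)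

lemma ascent_across_if_consecutive_ordered:
  assumes \<tau>: "\<tau> permutes {1..n}" and l: "2 \<le> l" "l \<le> n" "Suc l < k"
    and no_inversion: "\<not> inversion_below \<tau> n (Suc l)"
  shows "ascent_across \<tau> n l k"
proof -
  obtain a where a: "1 \<le> a" "a \<le> n" "\<tau> a = l - 1"
    by (rule permutes_interval_preimage[OF \<tau>, of "l - 1"]) (use l in auto)
  obtain b where b: "1 \<le> b" "b \<le> n" "\<tau> b = l"
    by (rule permutes_interval_preimage[OF \<tau>, of l]) (use l in auto)
  have "\<not> b < a"
  proof
    assume "b < a"
    then have "inversion_below \<tau> n (Suc l)"
      unfolding inversion_below_def using a b l by (intro exI[of _ b] exI[of _ a]) auto
    with no_inversion show False ..
  qed
  moreover have "a \<noteq> b" using a b l by auto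
  ultimately show ?thesis
    unfolding ascent_across_def using a b l by (intro exI[of _ a] exI[of _ b]) auto
qed

text \<open>The inversion below \<open>Suc L\<close> must start at the value \<open>L\<close>; together with the ascent across
  \<open>L\<close> it would form a 132 or a 213 below \<open>k - 1\<close>.\<close>
lemma not_ascent_across_at_first_inversion:
  assumes \<tau>: "\<tau> permutes {1..n}"
    and free: "\<not> has_132_or_213_below \<tau> n (k - 1)"
    and no_inversion: "\<not> inversion_below \<tau> n L" and inversion: "inversion_below \<tau> n (Suc L)"
  shows "\<not> ascent_across \<tau> n L k"
proof
  assume "ascent_across \<tau> n L k"
  then obtain a b where ab: "1 \<le> a" "a < b" "b \<le> n" "\<tau> a < L" "L \<le> \<tau> b" "Suc (\<tau> b) < k"
    unfolding ascent_across_def by blast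
  obtain c d where cd: "1 \<le> c" "c < d" "d \<le> n" "\<tau> d < \<tau> c" "\<tau> c < Suc L"
    using inversion unfolding inversion_below_def by blast
  have "\<not> \<tau> c < L"
    using no_inversion cd unfolding inversion_below_def by blast
  then have c: "\<tau> c = L" using cd by simp
  have no_pattern: "\<not> pattern_132_or_213 (\<tau> i1) (\<tau> i2) (\<tau> i3)"
    if "1 \<le> i1" "i1 < i2" "i2 < i3" "i3 \<le> n" "\<tau> i1 \<le> \<tau> b" "\<tau> i2 \<le> \<tau> b" "\<tau> i3 \<le> \<tau> b" for i1 i2 i3
  proof -
    have "\<tau> i1 < k - 1" "\<tau> i2 < k - 1" "\<tau> i3 < k - 1" using that ab(6) by linarith+
    then show ?thesis using free that(1-4) unfolding has_132_or_213_below_def by blast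
  qed
  have inj: "\<tau> i = \<tau> j \<Longrightarrow> i = j" for i j
    using permutes_inj[OF \<tau>] by (simp add: inj_eq)
  show False
  proof (cases "c < a")
    case True
    then have "\<tau> b \<noteq> L" using inj ab c by (metis less_asym)
    then show False
      using no_pattern[of c a b] True ab cd c unfolding pattern_132_or_213_def by auto
  next
    case False
    then have "a < c" using ab c by (metis linorder_neqE_nat less_irrefl)
    consider "\<tau> a < \<tau> d" | "\<tau> d < \<tau> a" | "\<tau> d = \<tau> a" by linarith
    then show False
    proof cases
      case 1
      then show False
        using no_pattern[of a c d] \<open>a < c\<close> ab cd c unfolding pattern_132_or_213_def by auto
    next
      case 2
      then have "inversion_below \<tau> n L"
        unfolding inversion_below_def using \<open>a < c\<close> ab cd by (intro exI[of _ a] exI[of _ d]) auto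
      with no_inversion show False ..
    next
      case 3
      then show False using inj \<open>a < c\<close> cd by fastforce
    qed
  qed
qed

lemma low_values_without_ascent_or_inversion:
  assumes \<tau>: "\<tau> permutes {1..n}" and k: "k \<le> n + 2"
    and free: "\<not> has_132_or_213_below \<tau> n (k - 1)"
    and L: "2 \<le> L" "L \<le> k - 1" "\<not> inversion_below \<tau> n L"
    and above_L: "\<And>l. L < l \<Longrightarrow> l \<le> k - 1 \<Longrightarrow> inversion_below \<tau> n l"
  shows "{l \<in> {1..k-1}. \<not> ascent_across \<tau> n l k \<and> \<not> inversion_below \<tau> n l} = {1, L}"
proof (intro set_eqI iffI)
  fix l assume "l \<in> {l \<in> {1..k-1}. \<not> ascent_across \<tau> n l k \<and> \<not> inversion_below \<tau> n l}"
  then have l: "1 \<le> l" "l \<le> k - 1" "\<not> ascent_across \<tau> n l k" "\<not> inversion_below \<tau> n l" by auto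
  have "l \<le> L" using above_L[of l] l by fastforce
  moreover have "\<not> (2 \<le> l \<and> l < L)"
  proof
    assume l_less: "2 \<le> l \<and> l < L"
    moreover have "\<not> inversion_below \<tau> n (Suc l)"
      using L(3) inversion_below_mono[of \<tau> n "Suc l" L] l_less by auto
    ultimately have "ascent_across \<tau> n l k"
      using L k by (intro ascent_across_if_consecutive_ordered[OF \<tau>]) auto
    with l show False by simp
  qed
  ultimately show "l \<in> {1, L}" using l by fastforce
next
  have range: "1 \<le> \<tau> i" if "1 \<le> i" "i \<le> n" for i
    using permutes_interval_range[OF \<tau>] that by blast
  fix l assume "l \<in> {1, L}"
  moreover have "\<not> ascent_across \<tau> n 1 k" "\<not> inversion_below \<tau> n 1"
    unfolding ascent_across_def inversion_below_def using range by fastforce+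
  moreover have "\<not> ascent_across \<tau> n L k"
  proof
    assume ascent: "ascent_across \<tau> n L k"
    then have "Suc L \<le> k - 1" unfolding ascent_across_def by auto
    then have "inversion_below \<tau> n (Suc L)" by (intro above_L) auto
    with ascent show False
      using not_ascent_across_at_first_inversion[OF \<tau> free L(3)] by blast
  qed
  ultimately show "l \<in> {l \<in> {1..k-1}. \<not> ascent_across \<tau> n l k \<and> \<not> inversion_below \<tau> n l}"
    using L by auto
qed

lemma card_low_values_without_ascent_or_inversion:
  assumes \<tau>: "\<tau> permutes {1..n}" and k: "4 \<le> k" "k \<le> n + 2"
    and free: "\<not> has_132_or_213_below \<tau> n (k - 1)"
  shows "card {l \<in> {1..k-1}. \<not> ascent_across \<tau> n l k \<and> \<not> inversion_below \<tau> n l} = 2"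
proof -
  define Ls where "Ls = {l \<in> {1..k-1}. \<not> inversion_below \<tau> n l}"
  define L where "L = Max Ls"
  have "\<not> inversion_below \<tau> n 2"
  proof
    assume "inversion_below \<tau> n 2"
    then obtain i1 i2 where "1 \<le> i1" "i1 < i2" "i2 \<le> n" "\<tau> i2 < \<tau> i1" "\<tau> i1 < 2"
      unfolding inversion_below_def by blast
    with permutes_interval_range[OF \<tau>, of i2] show False by linarith
  qed
  then have "2 \<in> Ls" using k by (simp add: Ls_def)
  moreover have "finite Ls" by (simp add: Ls_def)
  ultimately have "L \<in> Ls" "2 \<le> L"
    unfolding L_def by (auto intro: Max_in Max_ge)
  then have L: "2 \<le> L" "L \<le> k - 1" "\<not> inversion_below \<tau> n L"
    by (auto simp: Ls_def)
  have "inversion_below \<tau> n l" if "L < l" "l \<le> k - 1" for l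
    using Max_ge[OF \<open>finite Ls\<close>, of l] that unfolding L_def Ls_def by fastforce
  then show ?thesis
    using low_values_without_ascent_or_inversion[OF \<tau> k(2) free L] L by simp
qed

lemma card_extensions_free_below:
  assumes \<tau>: "\<tau> permutes {1..n}" and k: "4 \<le> k" "k \<le> n + 2"
  shows "card {l \<in> {1..Suc n}. \<not> has_132_or_213_below \<tau> n l \<and>
                 \<not> has_132_or_213_below (append_last \<tau> n l) (Suc n) k}
    = card {j \<in> {k..Suc n}. \<not> has_132_or_213_below \<tau> n j}
      + (if has_132_or_213_below \<tau> n (k - 1) then 0 else 2)"
proof -
  define high where "high = {j \<in> {k..Suc n}. \<not> has_132_or_213_below \<tau> n j}"
  define low where "low = {l \<in> {1..k-1}. \<not> has_132_or_213_below \<tau> n (k - 1) \<and>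
    \<not> ascent_across \<tau> n l k \<and> \<not> inversion_below \<tau> n l}"
  have "{l \<in> {1..Suc n}. \<not> has_132_or_213_below \<tau> n l \<and>
           \<not> has_132_or_213_below (append_last \<tau> n l) (Suc n) k} = high \<union> low"
  proof (rule set_eqI)
    fix l
    show "l \<in> {l \<in> {1..Suc n}. \<not> has_132_or_213_below \<tau> n l \<and>
           \<not> has_132_or_213_below (append_last \<tau> n l) (Suc n) k} \<longleftrightarrow> l \<in> high \<union> low"
      using has_132_or_213_below_append_last[of \<tau> n l k] k
        has_132_or_213_below_mono[of \<tau> n k l] has_132_or_213_below_mono[of \<tau> n l "k - 1"]
      by (cases "k \<le> l") (auto simp: high_def low_def)
  qed
  moreover have "high \<inter> low = {}" by (auto simp: high_def low_def)
  moreover have "card low = (if has_132_or_213_below \<tau> n (k - 1) then 0 else 2)"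
    using card_low_values_without_ascent_or_inversion[OF \<tau> k] by (simp add: low_def)
  ultimately show ?thesis by (simp add: card_Un_disjoint high_def low_def)
qed

section \<open>Recurrences for \<open>s\<close>\<close>

lemma av_perms_Suc_eq_image:
  "av_perms (Suc n) = (\<lambda>(\<tau>, l). append_last \<tau> n l) `
     (SIGMA \<tau>:av_perms n. {l \<in> {1..Suc n}. \<not> has_132_or_213_below \<tau> n l})"
proof (intro set_eqI iffI)
  fix \<sigma> assume "\<sigma> \<in> av_perms (Suc n)"
  then have \<sigma>: "\<sigma> permutes {1..Suc n}" "\<not> contains_1324_or_2134 \<sigma> (Suc n)"
    by (auto simp: av_perms_iff)
  let ?\<tau> = "remove_last \<sigma> n"
  have "?\<tau> permutes {1..n}" "append_last ?\<tau> n (\<sigma> (Suc n)) = \<sigma>"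
    using remove_last_permutes[OF \<sigma>(1)] append_last_remove_last[OF \<sigma>(1)] by auto
  moreover have "\<sigma> (Suc n) \<in> {1..Suc n}"
    using permutes_interval_range[OF \<sigma>(1), of "Suc n"] by auto
  ultimately show "\<sigma> \<in> (\<lambda>(\<tau>, l). append_last \<tau> n l) `
     (SIGMA \<tau>:av_perms n. {l \<in> {1..Suc n}. \<not> has_132_or_213_below \<tau> n l})"
    using \<sigma>(2) contains_1324_or_2134_append_last[of ?\<tau> n "\<sigma> (Suc n)"]
    by (intro image_eqI[of _ _ "(?\<tau>, \<sigma> (Suc n))"]) (auto simp: av_perms_iff)
next
  fix \<sigma> assume "\<sigma> \<in> (\<lambda>(\<tau>, l). append_last \<tau> n l) `
     (SIGMA \<tau>:av_perms n. {l \<in> {1..Suc n}. \<not> has_132_or_213_below \<tau> n l})"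
  then obtain \<tau> l where "\<tau> permutes {1..n}" "\<not> contains_1324_or_2134 \<tau> n" "l \<in> {1..Suc n}"
    "\<not> has_132_or_213_below \<tau> n l" "\<sigma> = append_last \<tau> n l"
    by (auto simp: av_perms_iff)
  then show "\<sigma> \<in> av_perms (Suc n)"
    using append_last_permutes contains_1324_or_2134_append_last by (auto simp: av_perms_iff)
qed

lemma inj_on_append_last:
  "inj_on (\<lambda>(\<tau>, l). append_last \<tau> n l) (SIGMA \<tau>:av_perms n. L \<tau>)"
proof (rule inj_onI, clarify)
  fix \<tau> l \<tau>' l' assume \<tau>: "\<tau> \<in> av_perms n" and \<tau>': "\<tau>' \<in> av_perms n"
    and eq: "append_last \<tau> n l = append_last \<tau>' n l'"
  have "\<tau> = remove_last (append_last \<tau> n l) n"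
    using \<tau> by (simp add: av_perms_iff remove_last_append_last)
  also have "\<dots> = \<tau>'"
    using \<tau>' by (simp add: eq av_perms_iff remove_last_append_last)
  finally have "\<tau> = \<tau>'" .
  moreover have "l = l'" using arg_cong[OF eq, of "\<lambda>\<sigma>. \<sigma> (Suc n)"] by simp
  ultimately show "\<tau> = \<tau>' \<and> l = l'" ..
qed

lemma card_av_perms_Suc_filter:
  "card {\<sigma> \<in> av_perms (Suc n). Q \<sigma>} =
     (\<Sum>\<tau>\<in>av_perms n. card {l \<in> {1..Suc n}. \<not> has_132_or_213_below \<tau> n l \<and> Q (append_last \<tau> n l)})"
proof -
  let ?f = "\<lambda>(\<tau>, l). append_last \<tau> n l"
  let ?P = "SIGMA \<tau>:av_perms n. {l \<in> {1..Suc n}. \<not> has_132_or_213_below \<tau> n l \<and> Q (append_last \<tau> n l)}"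
  have "{\<sigma> \<in> av_perms (Suc n). Q \<sigma>} = ?f ` ?P"
    unfolding av_perms_Suc_eq_image by auto
  then have "card {\<sigma> \<in> av_perms (Suc n). Q \<sigma>} = card ?P"
    by (simp add: card_image inj_on_append_last)
  also have "\<dots> = (\<Sum>\<tau>\<in>av_perms n. card {l \<in> {1..Suc n}. \<not> has_132_or_213_below \<tau> n l \<and> Q (append_last \<tau> n l)})"
    by (simp add: finite_av_perms)
  finally show ?thesis .
qed

lemma s_Suc_eq_card:
  assumes "l \<in> {1..Suc n}"
  shows "s (Suc n) l = card {\<tau> \<in> av_perms n. \<not> has_132_or_213_below \<tau> n l}"
proof -
  have "{l' \<in> {1..Suc n}. \<not> has_132_or_213_below \<tau> n l' \<and> append_last \<tau> n l' (Suc n) = l} =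
      (if \<not> has_132_or_213_below \<tau> n l then {l} else {})" for \<tau>
    using assms by auto
  then have "s (Suc n) l = (\<Sum>\<tau>\<in>av_perms n. card (if \<not> has_132_or_213_below \<tau> n l then {l} else {}))"
    unfolding s_def card_av_perms_Suc_filter by (simp only:)
  also have "\<dots> = (\<Sum>\<tau>\<in>av_perms n. if \<not> has_132_or_213_below \<tau> n l then 1 else 0)"
    by (intro sum.cong) auto
  also have "\<dots> = card {\<tau> \<in> av_perms n. \<not> has_132_or_213_below \<tau> n l}"
    by (simp add: sum.If_cases finite_av_perms Int_def)
  finally show ?thesis .
qed

lemma sum_card_free_eq_sum_s:
  assumes "J \<subseteq> {1..Suc n}"
  shows "(\<Sum>\<tau>\<in>av_perms n. card {j \<in> J. \<not> has_132_or_213_below \<tau> n j}) = (\<Sum>j\<in>J. s (Suc n) j)"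
proof -
  have "finite J" using assms finite_subset by blast
  then have "(\<Sum>\<tau>\<in>av_perms n. card {j \<in> J. \<not> has_132_or_213_below \<tau> n j}) =
      (\<Sum>j\<in>J. card {\<tau> \<in> av_perms n. \<not> has_132_or_213_below \<tau> n j})"
    using sum.swap_restrict[of "av_perms n" J "\<lambda>_ _. 1::nat"] by (simp add: finite_av_perms)
  also have "\<dots> = (\<Sum>j\<in>J. s (Suc n) j)"
    using assms by (intro sum.cong) (auto simp: s_Suc_eq_card)
  finally show ?thesis .
qed

lemma s_Suc_Suc_eq_sum:
  assumes "k \<in> {1..Suc (Suc n)}"
  shows "s (Suc (Suc n)) k = (\<Sum>\<tau>\<in>av_perms n. card {l \<in> {1..Suc n}.
    \<not> has_132_or_213_below \<tau> n l \<and> \<not> has_132_or_213_below (append_last \<tau> n l) (Suc n) k})"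
  using assms by (simp add: s_Suc_eq_card card_av_perms_Suc_filter)

lemma s_Suc_Suc_le_3:
  assumes "1 \<le> k" "k \<le> 3" "k \<le> Suc (Suc n)"
  shows "s (Suc (Suc n)) k = (\<Sum>j=1..Suc n. s (Suc n) j)"
proof -
  have k: "k \<in> {1..Suc (Suc n)}" using assms by simp
  have "s (Suc (Suc n)) k = (\<Sum>\<tau>\<in>av_perms n. card {j \<in> {1..Suc n}. \<not> has_132_or_213_below \<tau> n j})"
    unfolding s_Suc_Suc_eq_sum[OF k]
    using assms not_has_132_or_213_below_3[OF append_last_permutes]
    by (intro sum.cong refl arg_cong[where f = card]) (auto simp: av_perms_iff)
  also have "\<dots> = (\<Sum>j=1..Suc n. s (Suc n) j)" by (rule sum_card_free_eq_sum_s) simp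
  finally show ?thesis .
qed

lemma s_Suc_Suc_ge_4:
  assumes k: "4 \<le> k" "k \<le> Suc (Suc n)"
  shows "s (Suc (Suc n)) k = (\<Sum>j=k..Suc n. s (Suc n) j) + 2 * s (Suc n) (k - 1)"
proof -
  \<comment> \<open>writing the 2 as a card lets \<open>sum_card_free_eq_sum_s\<close> handle both summands\<close>
  have extensions: "card {l \<in> {1..Suc n}. \<not> has_132_or_213_below \<tau> n l \<and>
        \<not> has_132_or_213_below (append_last \<tau> n l) (Suc n) k} =
      card {j \<in> {k..Suc n}. \<not> has_132_or_213_below \<tau> n j} +
      2 * card {j \<in> {k - 1}. \<not> has_132_or_213_below \<tau> n j}" if "\<tau> \<in> av_perms n" for \<tau>
  proof -
    have "{j \<in> {k - 1}. \<not> has_132_or_213_below \<tau> n j} =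
        (if has_132_or_213_below \<tau> n (k - 1) then {} else {k - 1})"
      by auto
    then show ?thesis
      using card_extensions_free_below[of \<tau> n k] k that by (simp add: av_perms_iff)
  qed
  have k': "k \<in> {1..Suc (Suc n)}" using k by simp
  have "s (Suc (Suc n)) k = (\<Sum>\<tau>\<in>av_perms n. card {j \<in> {k..Suc n}. \<not> has_132_or_213_below \<tau> n j} +
      2 * card {j \<in> {k - 1}. \<not> has_132_or_213_below \<tau> n j})"
    unfolding s_Suc_Suc_eq_sum[OF k'] by (rule sum.cong[OF refl extensions])
  also have "\<dots> = (\<Sum>\<tau>\<in>av_perms n. card {j \<in> {k..Suc n}. \<not> has_132_or_213_below \<tau> n j}) +
      2 * (\<Sum>\<tau>\<in>av_perms n. card {j \<in> {k - 1}. \<not> has_132_or_213_below \<tau> n j})"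
    by (simp only: sum.distrib sum_distrib_left)
  also have "\<dots> = (\<Sum>j=k..Suc n. s (Suc n) j) + 2 * (\<Sum>j\<in>{k - 1}. s (Suc n) j)"
  proof -
    have "{k..Suc n} \<subseteq> {1..Suc n}" "{k - 1} \<subseteq> {1..Suc n}" using k by auto
    then show ?thesis by (simp only: sum_card_free_eq_sum_s)
  qed
  finally show ?thesis by simp
qed

lemma av_perms_0: "av_perms 0 = {id}"
  by (auto simp: av_perms_iff contains_1324_or_2134_def)

lemma s_1_1: "s (Suc 0) (Suc 0) = 1"
proof -
  have "{\<tau> \<in> av_perms 0. \<not> has_132_or_213_below \<tau> 0 1} = {id}"
    by (auto simp: av_perms_0 has_132_or_213_below_def)
  then show ?thesis using s_Suc_eq_card[of 1 0] by simp
qed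

lemma card_av_perms_eq_sum_s:
  assumes "1 \<le> n"
  shows "card (av_perms n) = (\<Sum>l=1..n. s n l)"
proof -
  have "av_perms n = (\<Union>l\<in>{1..n}. {\<sigma> \<in> av_perms n. \<sigma> n = l})"
    using permutes_interval_range[of _ n n] assms by (auto simp: av_perms_iff)
  then have "card (av_perms n) = card (\<Union>l\<in>{1..n}. {\<sigma> \<in> av_perms n. \<sigma> n = l})" by simp
  also have "\<dots> = (\<Sum>l=1..n. s n l)"
    unfolding s_def by (rule card_UN_disjoint) (auto simp: finite_av_perms)
  finally show ?thesis .
qed

section \<open>The Schroeder series\<close>

lemma fps_power_mult_power_nth_eq_0:
  fixes f g h :: "'a::comm_ring_1 fps"
  assumes "f $ 0 = 0" "g $ 0 = 0" "m < i + j"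
  shows "(f ^ i * g ^ j * h) $ m = 0"
proof -
  have f: "f = fps_X * fps_shift 1 f" and g: "g = fps_X * fps_shift 1 g"
    using assms(1,2) by (auto intro!: fps_ext)
  have "f ^ i * g ^ j * h = fps_X ^ (i + j) * ((fps_shift 1 f) ^ i * (fps_shift 1 g) ^ j * h)"
    by (subst f, subst g) (simp add: power_mult_distrib power_add algebra_simps)
  then show ?thesis using assms(3) by (simp add: fps_X_power_mult_nth)
qed

lemma one_minus_mult_sum_power_interval:
  fixes x :: "'a::comm_ring_1"
  assumes "a \<le> b"
  shows "(1 - x) * (\<Sum>i=a..<b. x ^ i) = x ^ a - x ^ b"
proof -
  have "(\<Sum>i<b. x ^ i) = (\<Sum>i<a. x ^ i) + (\<Sum>i=a..<b. x ^ i)"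
    using sum.atLeastLessThan_concat[of 0 a b "\<lambda>i. x ^ i"] assms by (simp add: atLeast0LessThan)
  then have "(1 - x) * (\<Sum>i=a..<b. x ^ i) = (1 - x) * (\<Sum>i<b. x ^ i) - (1 - x) * (\<Sum>i<a. x ^ i)"
    by (simp add: algebra_simps)
  also have "\<dots> = x ^ a - x ^ b"
    by (simp add: one_diff_power_eq[symmetric])
  finally show ?thesis .
qed

lemma fps_mult_inverse_one_minus_nth:
  fixes g W :: "'a::field fps"
  assumes "g $ 0 = 0" "W $ 0 = 0"
  shows "(g * inverse (1 - W)) $ m = (\<Sum>i<m. (g * W ^ i) $ m)"
proof -
  let ?G = "inverse (1 - W)"
  have inverse: "?G * (1 - W) = 1" using assms(2) by (intro inverse_mult_eq_1) simp
  have "?G = ?G * ((1 - W) * (\<Sum>i<m. W ^ i) + W ^ m)"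
    by (simp add: one_diff_power_eq[symmetric])
  also have "\<dots> = (?G * (1 - W)) * (\<Sum>i<m. W ^ i) + W ^ m * ?G"
    by (simp add: algebra_simps)
  finally have "?G = (\<Sum>i<m. W ^ i) + W ^ m * ?G"
    by (simp add: inverse)
  then have "g * ?G = g * ((\<Sum>i<m. W ^ i) + W ^ m * ?G)"
    by (rule arg_cong)
  also have "\<dots> = (\<Sum>i<m. g * W ^ i) + g ^ 1 * W ^ m * ?G"
    by (simp add: algebra_simps sum_distrib_left)
  finally have "g * ?G = (\<Sum>i<m. g * W ^ i) + g ^ 1 * W ^ m * ?G" .
  moreover have "(g ^ 1 * W ^ m * ?G) $ m = 0"
    using assms by (intro fps_power_mult_power_nth_eq_0) simp_all
  ultimately show ?thesis by (simp add: fps_sum_nth)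
qed

locale schroeder_series =
  fixes S :: "'a::comm_ring_1 fps"
  assumes nth_0 [simp]: "S $ 0 = 0"
    and functional_eq: "S = fps_X + fps_X * S + S ^ 2"
begin

definition V :: "'a fps" where
  "V = fps_X + S"

lemma V_nth_0 [simp]: "V $ 0 = 0"
  by (simp add: V_def)

lemma square_eq: "S ^ 2 = (1 - fps_X) * S - fps_X"
  using functional_eq by (simp add: algebra_simps)

lemma mult_V: "S * V = S - fps_X"
  using square_eq by (simp add: V_def algebra_simps power2_eq_square)

lemma mult_one_minus_V: "S * (1 - V) = fps_X"
  using square_eq by (simp add: V_def algebra_simps power2_eq_square)

lemma V_eq: "V = S * V + 2 * fps_X"
  using square_eq by (simp add: V_def algebra_simps power2_eq_square)

lemma nth_1 [simp]: "S $ Suc 0 = 1"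
  by (subst functional_eq) (simp add: fps_square_nth)

lemma nth_ge_2: "2 \<le> n \<Longrightarrow> S $ n = S $ (n - 1) + (S ^ 2) $ n"
  by (subst functional_eq) simp

lemma denominator_factor:
  "1 - C * (1 + fps_X) + 2 * C ^ 2 * fps_X = (1 - C + C * S) * (1 - C * V)"
proof -
  have "1 - C * (1 + fps_X) + 2 * C ^ 2 * fps_X
      = (1 - C + C * S) * (1 - C * V) + C ^ 2 * (S ^ 2 - ((1 - fps_X) * S - fps_X))"
    unfolding V_def by (simp add: algebra_simps power2_eq_square)
  then show ?thesis by (simp add: square_eq)
qed

text \<open>For \<open>l \<le> 2\<close> the exponent \<open>l - 2\<close> truncates to \<open>0\<close>.\<close>
definition s_closed :: "nat \<Rightarrow> nat \<Rightarrow> 'a" where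
  "s_closed N l = (S * V ^ (l - 2)) $ (N - 1)"

lemma sum_s_closed_from:
  assumes "2 \<le> k" "k \<le> n + 2"
  shows "(\<Sum>j=k..n+1. s_closed (n + 1) j) = (S ^ 2 * V ^ (k - 2)) $ (n + 1)"
proof -
  let ?P = "\<Sum>i=k-2..<n. V ^ i"
  have "{k..n+1} = {k - 2 + 2..<n + 2}" using assms by auto
  then have "(\<Sum>j=k..n+1. s_closed (n + 1) j) = (\<Sum>i=k-2..<n. (S * V ^ i) $ n)"
    using sum.shift_bounds_nat_ivl[of "s_closed (n + 1)" "k - 2" 2 n] by (simp add: s_closed_def)
  also have "\<dots> = (fps_X * (S * ?P)) $ (n + 1)"
    by (simp add: sum_distrib_left fps_sum_nth)
  also have "fps_X * (S * ?P) = S * S * ((1 - V) * ?P)"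
    by (simp add: mult_one_minus_V[symmetric] algebra_simps)
  also have "(1 - V) * ?P = V ^ (k - 2) - V ^ n"
    using assms by (intro one_minus_mult_sum_power_interval) simp
  also have "S * S * (V ^ (k - 2) - V ^ n) = S ^ 2 * V ^ (k - 2) - S ^ 2 * V ^ n * 1"
    by (simp add: algebra_simps power2_eq_square)
  also have "(\<dots>) $ (n + 1) = (S ^ 2 * V ^ (k - 2)) $ (n + 1)"
    using fps_power_mult_power_nth_eq_0[OF nth_0 V_nth_0, of "n + 1" 2 n 1] by simp
  finally show ?thesis .
qed

lemma sum_s_closed:
  assumes "2 \<le> N"
  shows "(\<Sum>l=1..N. s_closed N l) = S $ N"
proof -
  have "(\<Sum>l=1..N. s_closed N l) = s_closed N 1 + (\<Sum>l=2..N. s_closed N l)"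
    using assms by (simp add: sum.atLeast_Suc_atMost numeral_2_eq_2)
  also have "(\<Sum>l=2..N. s_closed N l) = (S ^ 2) $ N"
    using sum_s_closed_from[of 2 "N - 1"] assms by simp
  finally show ?thesis
    using nth_ge_2[OF assms] by (simp add: s_closed_def)
qed

lemma s_closed_le_3:
  assumes "3 \<le> N" "1 \<le> l" "l \<le> 3"
  shows "s_closed N l = S $ (N - 1)"
proof (cases "l = 3")
  case True
  then show ?thesis using assms by (simp add: s_closed_def mult_V)
next
  case False
  then show ?thesis using assms by (simp add: s_closed_def)
qed

lemma s_closed_ge_4:
  assumes "4 \<le> k" "k \<le> n + 2"
  shows "s_closed (n + 2) k = (\<Sum>j=k..n+1. s_closed (n + 1) j) + 2 * s_closed (n + 1) (k - 1)"
proof -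
  obtain j where j: "k = j + 4" using assms(1) by (metis add.commute le_Suc_ex)
  have "S * V ^ (j + 2) = S * V ^ (j + 1) * V"
    by (simp add: algebra_simps)
  also have "\<dots> = S * V ^ (j + 1) * (S * V + 2 * fps_X)"
    using V_eq by (rule arg_cong)
  finally have "S * V ^ (j + 2) = S ^ 2 * V ^ (j + 2) + fps_X * (2 * (S * V ^ (j + 1)))"
    by (simp add: algebra_simps power2_eq_square)
  then have "s_closed (n + 2) k = (S ^ 2 * V ^ (k - 2)) $ (n + 1) + 2 * (S * V ^ (j + 1)) $ n"
    by (simp add: s_closed_def j fps_numeral_fps_const)
  then show ?thesis
    using sum_s_closed_from[of k n] assms by (simp add: s_closed_def j)
qed

lemma of_nat_s_eq_s_closed:
  assumes "2 \<le> N" "l \<in> {1..N}"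
  shows "of_nat (s N l) = s_closed N l"
  using assms
proof (induction N arbitrary: l rule: nat_induct_at_least)
  case base
  then have "s 2 l = 1"
    using s_Suc_Suc_le_3[of l 0] s_1_1 by (simp add: numeral_2_eq_2)
  then show ?case using base by (simp add: s_closed_def)
next
  case (Suc N)
  obtain n where N: "N = Suc n" using Suc.hyps by (metis Suc_le_D numeral_2_eq_2)
  have IH: "of_nat (s N j) = s_closed N j" if "j \<in> {1..N}" for j
    using Suc.IH that by blast
  show ?case
  proof (cases "l \<le> 3")
    case True
    then have "of_nat (s (Suc N) l) = (\<Sum>j=1..N. of_nat (s N j) :: 'a)"
      using Suc.prems N s_Suc_Suc_le_3[of l n] by simp
    also have "\<dots> = (\<Sum>j=1..N. s_closed N j)" by (intro sum.cong) (auto simp: IH)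
    also have "\<dots> = s_closed (Suc N) l"
      using sum_s_closed[OF Suc.hyps] s_closed_le_3[of "Suc N" l] True Suc by simp
    finally show ?thesis .
  next
    case False
    then have "of_nat (s (Suc N) l) = (\<Sum>j=l..N. of_nat (s N j) :: 'a) + 2 * of_nat (s N (l - 1))"
      using Suc.prems N s_Suc_Suc_ge_4[of l n] by simp
    also have "\<dots> = (\<Sum>j=l..N. s_closed N j) + 2 * s_closed N (l - 1)"
    proof -
      have "l - 1 \<in> {1..N}" using False Suc.prems by auto
      then show ?thesis using False Suc.prems by (simp add: IH)
    qed
    also have "\<dots> = s_closed (Suc N) l"
      using s_closed_ge_4[of l n] False Suc.prems N by simp
    finally show ?thesis .
  qed
qed

lemma row_sums: "Abs_fps (\<lambda>n. \<Sum>l=1..n. of_nat (s n l)) = S"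
proof (rule fps_ext)
  fix n :: nat
  consider "n = 0" | "n = 1" | "2 \<le> n" by linarith
  then show "Abs_fps (\<lambda>n. \<Sum>l=1..n. of_nat (s n l)) $ n = S $ n"
  proof cases
    case 3
    then have "(\<Sum>l=1..n. of_nat (s n l)) = (\<Sum>l=1..n. s_closed n l)"
      by (intro sum.cong) (simp_all add: of_nat_s_eq_s_closed)
    then show ?thesis using sum_s_closed[OF 3] by simp
  qed (simp_all add: s_1_1)
qed

end

section \<open>The bivariate generating function\<close>

locale schroeder_series_field = schroeder_series S for S :: "'a::field fps"
begin

lemma bivariate_gf:
  "Abs_fps (\<lambda>n. \<Sum>l=1..n. of_nat (s n l) * c ^ l) =
     fps_X * fps_const c * (1 + S) + fps_X * fps_const c ^ 2 * S * inverse (1 - fps_const c * V)"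
  (is "?h = ?rhs")
proof (rule fps_ext)
  fix n :: nat
  consider "n = 0" | "n = 1" | "2 \<le> n" by linarith
  then show "?h $ n = ?rhs $ n"
  proof cases
    case 3
    define m where "m = n - 1"
    have n: "n = Suc m" "1 \<le> m" using 3 by (simp_all add: m_def)
    have "?h $ n = (\<Sum>l=1..n. s_closed n l * c ^ l)"
      using 3 by (simp add: of_nat_s_eq_s_closed)
    also have "\<dots> = S $ m * c + (\<Sum>i<m. (S * V ^ i) $ m * c ^ (i + 2))"
    proof -
      have "{0 + 2..m - 1 + 2} = {2..n}" "{0..m - 1} = {..<m}" using n by auto
      then have "(\<Sum>l=2..n. s_closed n l * c ^ l) = (\<Sum>i<m. s_closed n (i + 2) * c ^ (i + 2))"
        using sum.shift_bounds_cl_nat_ivl[of "\<lambda>l. s_closed n l * c ^ l" 0 2 "m - 1"]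
        by (simp only: add_0)
      then show ?thesis
        using n by (simp add: sum.atLeast_Suc_atMost numeral_2_eq_2 s_closed_def)
    qed
    also have "\<dots> = c * (1 + S) $ m + c ^ 2 * (\<Sum>i<m. (S * (fps_const c * V) ^ i) $ m)"
    proof -
      have "(S * (fps_const c * V) ^ i) $ m = c ^ i * (S * V ^ i) $ m" for i
        by (simp add: power_mult_distrib fps_const_power mult.left_commute[of S])
      then show ?thesis
        using n by (simp add: sum_distrib_left power_add power2_eq_square mult_ac)
    qed
    also have "\<dots> = ?rhs $ n"
      using n fps_mult_inverse_one_minus_nth[of S "fps_const c * V" m]
      by (simp add: mult.assoc fps_const_power del: power_mult_distrib)
    finally show ?thesis .
  qed (simp_all add: s_1_1)
qed

lemma bivariate_gf_closed_form:
  assumes c: "c \<noteq> 1" and two: "(2::'a) \<noteq> 0"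
  shows "Abs_fps (\<lambda>n. \<Sum>l=1..n. of_nat (s n l) * c ^ l) =
    (2 * fps_const c * fps_X * (1 - fps_const c) * (1 - fps_const c * fps_X)
       + fps_const c * fps_X * (1 - fps_const c * (1 - fps_const c) * fps_X) * (2 * S))
    / (2 * (1 - fps_const c * (1 + fps_X) + 2 * fps_const c ^ 2 * fps_X))"
proof -
  define C where "C = fps_const c"
  define K where "K = 1 - C * (1 + fps_X) + 2 * C ^ 2 * fps_X"
  define G where "G = inverse (1 - C * V)"
  define H where "H = fps_X * C * (1 + S) + fps_X * C ^ 2 * S * G"
  have "K = (1 - C + C * S) * (1 - C * V)"
    unfolding K_def by (rule denominator_factor)
  moreover have "G * (1 - C * V) = 1"
    unfolding G_def by (intro inverse_mult_eq_1) (simp add: C_def)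
  ultimately have "K * G = 1 - C + C * S"
    by (simp add: mult.commute mult.left_commute)
  have "H * (2 * K) = 2 * fps_X * C * ((1 + S) * K + C * S * (K * G))"
    unfolding H_def by (simp add: algebra_simps power2_eq_square)
  also have "\<dots> = 2 * fps_X * C * ((1 + S) * K + C * S * (1 - C + C * S))"
    by (simp only: \<open>K * G = 1 - C + C * S\<close>)
  also have "\<dots> = 2 * C * fps_X * (1 - C) * (1 - C * fps_X)
      + C * fps_X * (1 - C * (1 - C) * fps_X) * (2 * S)
      + 2 * fps_X * C * C ^ 2 * (S ^ 2 - ((1 - fps_X) * S - fps_X))"
    unfolding K_def by (simp add: algebra_simps power2_eq_square)
  finally have numerator: "H * (2 * K) =
      2 * C * fps_X * (1 - C) * (1 - C * fps_X) + C * fps_X * (1 - C * (1 - C) * fps_X) * (2 * S)"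
    by (simp add: square_eq)
  have "(2 * K) $ 0 = 2 * (1 - c)"
    by (simp add: K_def C_def fps_numeral_fps_const)
  then have unit: "(2 * K) $ 0 \<noteq> 0" using c two by simp
  have "Abs_fps (\<lambda>n. \<Sum>l=1..n. of_nat (s n l) * c ^ l) = H"
    unfolding H_def G_def C_def by (rule bivariate_gf)
  also have "H = H * (2 * K) / (2 * K)"
    using inverse_mult_eq_1'[OF unit] by (simp add: fps_divide_unit[OF unit] mult.assoc)
  finally show ?thesis
    unfolding numerator by (simp only: C_def K_def)
qed

end

section \<open>Square roots of \<open>1 - 6x + x^2\<close>\<close>

lemma fps_mult_2_divide_2:
  fixes f :: "'a::field fps"
  assumes "(2::'a) \<noteq> 0"
  shows "2 * (f / 2) = f"
proof -
  have "(2::'a fps) $ 0 \<noteq> 0" using assms by (simp add: fps_numeral_fps_const)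
  then show ?thesis by (simp add: fps_divide_unit inverse_mult_eq_1' mult.left_commute[of 2])
qed

lemma schroeder_series_of_sqrt:
  fixes r :: "'a::field fps"
  assumes r0: "r $ 0 = 1" and r_square: "r ^ 2 = 1 - 6 * fps_X + fps_X ^ 2" and two: "(2::'a) \<noteq> 0"
  shows "schroeder_series_field ((1 - fps_X - r) / 2)"
proof
  let ?S = "(1 - fps_X - r) / 2"
  have r: "r = 1 - fps_X - 2 * ?S"
    using fps_mult_2_divide_2[OF two] by simp
  then show "?S $ 0 = 0"
    using r0 two by (simp add: fps_numeral_fps_const)
  have "4 * (fps_X + fps_X * ?S + ?S ^ 2 - ?S) = r ^ 2 - (1 - 6 * fps_X + fps_X ^ 2)"
    by (subst (2) r) (simp add: algebra_simps power2_eq_square)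
  then have "(4 :: 'a fps) * (fps_X + fps_X * ?S + ?S ^ 2 - ?S) = 0"
    using r_square by simp
  moreover have "(4 :: 'a fps) \<noteq> 0"
    using two by (metis fps_numeral_fps_const fps_const_eq_0_iff mult_2 numeral_Bit0 mult_eq_0_iff)
  ultimately have "fps_X + fps_X * ?S + ?S ^ 2 - ?S = 0"
    by (simp only: mult_eq_0_iff) blast
  then show "?S = fps_X + fps_X * ?S + ?S ^ 2"
    by (simp only: right_minus_eq)
qed

lemma row_sums_of_sqrt:
  fixes r :: "'a::field fps"
  assumes "r $ 0 = 1" "r ^ 2 = 1 - 6 * fps_X + fps_X ^ 2" "(2::'a) \<noteq> 0"
  shows "Abs_fps (\<lambda>n. \<Sum>l=1..n. of_nat (s n l)) = (1 - fps_X - r) / 2"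
proof -
  interpret schroeder_series_field "(1 - fps_X - r) / 2"
    by (rule schroeder_series_of_sqrt[OF assms])
  show ?thesis by (rule row_sums)
qed

lemma bivariate_gf_of_sqrt:
  fixes r :: "'a::field fps"
  assumes "r $ 0 = 1" "r ^ 2 = 1 - 6 * fps_X + fps_X ^ 2" and two: "(2::'a) \<noteq> 0" and "c \<noteq> 1"
  shows "Abs_fps (\<lambda>n. \<Sum>l=1..n. of_nat (s n l) * c ^ l) =
    (2 * fps_const c * fps_X * (1 - fps_const c) * (1 - fps_const c * fps_X)
       + fps_const c * fps_X * (1 - fps_const c * (1 - fps_const c) * fps_X) * (1 - fps_X - r))
    / (2 * (1 - fps_const c * (1 + fps_X) + 2 * fps_const c ^ 2 * fps_X))"
proof -
  interpret schroeder_series_field "(1 - fps_X - r) / 2"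
    by (rule schroeder_series_of_sqrt[OF assms(1-3)])
  show ?thesis
    using bivariate_gf_closed_form[OF assms(4) two] by (simp only: fps_mult_2_divide_2[OF two])
qed

lemma sqrt_fps_nth_0: "sqrt_fps $ 0 = 1"
  by (simp add: sqrt_fps_def)

lemma sqrt_fps_square: "sqrt_fps ^ 2 = 1 - 6 * fps_X + fps_X ^ 2"
proof -
  have "root 2 ((1 - 6 * fps_X + fps_X ^ 2 :: real fps) $ 0) ^ 2 = (1 - 6 * fps_X + fps_X ^ 2 :: real fps) $ 0"
    by simp
  then show ?thesis
    using power_radical[of "1 - 6 * fps_X + fps_X ^ 2 :: real fps" "\<lambda>k c. root k c" 1]
    by (simp add: sqrt_fps_def numeral_2_eq_2)
qed

definition const_fract :: "real \<Rightarrow> real poly fract" where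
  "const_fract r = to_fract [:r:]"

lemma const_fract_add: "const_fract (a + b) = const_fract a + const_fract b"
  and const_fract_diff: "const_fract (a - b) = const_fract a - const_fract b"
  and const_fract_mult: "const_fract (a * b) = const_fract a * const_fract b"
  and const_fract_0: "const_fract 0 = 0"
  and const_fract_1: "const_fract 1 = 1"
  by (simp_all add: const_fract_def one_pCons[symmetric] flip: to_fract_add to_fract_diff to_fract_mult)

lemma const_fract_sum: "const_fract (sum f A) = (\<Sum>x\<in>A. const_fract (f x))"
  by (induction A rule: infinite_finite_induct) (simp_all add: const_fract_0 const_fract_add)

lemma const_fract_numeral: "const_fract (numeral k) = numeral k"
  by (induction k) (simp_all only: numeral_One numeral_Bit0 numeral_Bit1 const_fract_add const_fract_1)

definition fps_embed :: "real fps \<Rightarrow> real poly fract fps" where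
  "fps_embed f = Abs_fps (\<lambda>n. const_fract (f $ n))"

lemma fps_embed_nth [simp]: "fps_embed f $ n = const_fract (f $ n)"
  by (simp add: fps_embed_def)

lemma fps_embed_add: "fps_embed (f + g) = fps_embed f + fps_embed g"
  and fps_embed_diff: "fps_embed (f - g) = fps_embed f - fps_embed g"
  and fps_embed_mult: "fps_embed (f * g) = fps_embed f * fps_embed g"
  and fps_embed_1: "fps_embed 1 = 1"
  and fps_embed_X: "fps_embed fps_X = fps_X"
  and fps_embed_numeral: "fps_embed (numeral k) = numeral k"
  by (auto intro!: fps_ext simp: fps_mult_nth fps_X_def const_fract_add const_fract_diff const_fract_mult
      const_fract_sum const_fract_0 const_fract_1 const_fract_numeral fps_numeral_nth)

lemma sqrt_fps_u_eq_embed: "sqrt_fps_u = fps_embed sqrt_fps"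
  by (simp add: sqrt_fps_u_def fps_embed_def const_fract_def)

lemma sqrt_fps_u_square: "sqrt_fps_u ^ 2 = 1 - 6 * fps_X + fps_X ^ 2"
proof -
  have "sqrt_fps_u ^ 2 = fps_embed (sqrt_fps ^ 2)"
    by (simp only: sqrt_fps_u_eq_embed power2_eq_square fps_embed_mult)
  also have "\<dots> = fps_embed (1 - 6 * fps_X + fps_X ^ 2)"
    by (simp only: sqrt_fps_square)
  also have "\<dots> = 1 - 6 * fps_X + fps_X ^ 2"
    by (simp only: power2_eq_square fps_embed_diff fps_embed_add fps_embed_mult fps_embed_1
        fps_embed_X fps_embed_numeral)
  finally show ?thesis .
qed

lemma sqrt_fps_u_nth_0: "sqrt_fps_u $ 0 = 1"
  by (simp add: sqrt_fps_u_eq_embed sqrt_fps_nth_0 const_fract_1)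

lemma u_var_neq_1: "u_var \<noteq> 1"
  by (simp add: u_var_def one_pCons flip: to_fract_1)

lemma two_real_poly_fract_neq_0: "(2 :: real poly fract) \<noteq> 0"
  using const_fract_numeral[of "num.Bit0 num.One"] by (simp add: const_fract_def)

theorem corollary5p3:
  shows "(h_fps =
      (2 * fps_const u_var * fps_X * (1 - fps_const u_var) * (1 - fps_const u_var * fps_X)
       + fps_const u_var * fps_X * (1 - fps_const u_var * (1 - fps_const u_var) * fps_X)
           * (1 - fps_X - sqrt_fps_u))
      / (2 * (1 - fps_const u_var * (1 + fps_X) + 2 * fps_const u_var ^ 2 * fps_X)))
    \<and> (Abs_fps (\<lambda>n. \<Sum>l=1..n. real (s n l)) = (1 - fps_X - sqrt_fps) / 2)
    \<and> (\<forall>n\<ge>1. real (card (av_perms n)) = ((1 - fps_X - sqrt_fps) / 2) $ n)"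
proof -
  have row_sums: "Abs_fps (\<lambda>n. \<Sum>l=1..n. real (s n l)) = (1 - fps_X - sqrt_fps) / 2"
    using row_sums_of_sqrt[OF sqrt_fps_nth_0 sqrt_fps_square] by simp
  have "real (card (av_perms n)) = ((1 - fps_X - sqrt_fps) / 2) $ n" if "1 \<le> n" for n
    using that by (simp add: card_av_perms_eq_sum_s flip: row_sums)
  with row_sums show ?thesis
    unfolding h_fps_def using bivariate_gf_of_sqrt[OF sqrt_fps_u_nth_0 sqrt_fps_u_square
        two_real_poly_fract_neq_0 u_var_neq_1]
    by blast
qed

end
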